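(* Let $F_1,\ldots,F_m$ be subsets of $[n]$ with $|F_i|=d$ for all $i$, and let $\Delta$ be the simplicial complex they generate. Let $m_i=\prod_{j\in F_i}X_j$ and $$f(X_1,\ldots,X_n,Y_1,\ldots,Y_m)=\sum_{i=1}^m Y_i\, m_i(X_1,\ldots,X_n)\in\mathbb{Q}[X_1,\ldots,X_n,Y_1,\ldots,Y_m].$$ Then a basis of the linear space $\partial^+ f$ consists of the following $2|\Delta|$ polynomials: (i) the $|\Delta|$ monomials $\prod_{j\in F}X_j$ for $F$ a face of $\Delta$; (ii) the $|\Delta|$ polynomials $\partial f/\partial F$ for $F$ a face of $\Delta$, where $\partial f/\partial F$ is obtained from $f$ by differentiating once with respect to each variable $X_j$ with $j\in F$. In particular $\dim\partial^+ f=2|\Delta|$.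
   Context: The simplicial complex generated by $F_1,\ldots,F_m\subseteq[n]$ is the family $\Delta$ of all nonempty $Y\subseteq[n]$ with $Y\subseteq F_i$ for some $i$; its elements are called faces and $|\Delta|$ is their number. For a polynomial $f$, $\partial^+ f$ denotes the linear space spanned by the partial derivatives of $f$ of order $r$ for all $r$ with $1\le r\le\deg(f)-1$. *)

theory Defs
  imports Complex_Main "HOL-Library.Poly_Mapping" "HOL-Library.Function_Algebras"
begin

text \<open>Variables: Inl j is X_j, Inr i is Y_i. Monomials are finitely supported
exponent maps; a polynomial over Q is its coefficient function (monomial to rat).
Polynomials live in the Q-vector space of all such functions (pointwise operations).\<close>

type_synonym var = "nat + nat"
type_synonym mon = "var \<Rightarrow>\<^sub>0 nat"
type_synonym qpoly = "mon \<Rightarrow> rat"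

definition scaleQ :: "rat \<Rightarrow> qpoly \<Rightarrow> qpoly" where
  "scaleQ c p = (\<lambda>\<mu>. c * p \<mu>)"

definition monoP :: "mon \<Rightarrow> qpoly" where
  "monoP e = (\<lambda>\<mu>. if \<mu> = e then 1 else 0)"

definition xexp :: "nat set \<Rightarrow> mon" where
  "xexp F = (\<Sum>j\<in>F. Poly_Mapping.single (Inl j) 1)"

text \<open>Total degree of a monomial and of a polynomial (degree of 0 taken as 0).\<close>
definition tdeg :: "mon \<Rightarrow> nat" where
  "tdeg \<mu> = (\<Sum>v\<in>Poly_Mapping.keys \<mu>. Poly_Mapping.lookup \<mu> v)"

definition pdeg :: "qpoly \<Rightarrow> nat" where
  "pdeg p = Max (insert 0 {tdeg \<mu> | \<mu>. p \<mu> \<noteq> 0})"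

definition pderivQ :: "var \<Rightarrow> qpoly \<Rightarrow> qpoly" where
  "pderivQ v p = (\<lambda>\<mu>. of_nat (Poly_Mapping.lookup \<mu> v + 1) * p (\<mu> + Poly_Mapping.single v 1))"

definition pderivs :: "var list \<Rightarrow> qpoly \<Rightarrow> qpoly" where
  "pderivs vs p = fold pderivQ vs p"

text \<open>The space of partial derivatives of order r, 1 <= r <= deg f - 1, as a spanning set.\<close>
definition partials_plus :: "qpoly \<Rightarrow> qpoly set" where
  "partials_plus f = {pderivs vs f | vs. 1 \<le> length vs \<and> length vs \<le> pdeg f - 1}"

definition dF :: "nat set \<Rightarrow> qpoly \<Rightarrow> qpoly" where
  "dF F f = pderivs (map Inl (sorted_list_of_set F)) f"

definition gen_complex :: "nat \<Rightarrow> (nat \<Rightarrow> nat set) \<Rightarrow> nat set set" where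
  "gen_complex m F = {Y. Y \<noteq> {} \<and> (\<exists>i\<in>{1..m}. Y \<subseteq> F i)}"

definition fpoly :: "nat \<Rightarrow> (nat \<Rightarrow> nat set) \<Rightarrow> qpoly" where
  "fpoly m F = (\<Sum>i\<in>{1..m}. monoP (Poly_Mapping.single (Inr i) 1 + xexp (F i)))"

end

theory Submission
  imports Defs
begin

text \<open>Write T i (facet_vars F i) for the variable set {Y_i} \<union> {X_j | j \<in> F_i}, so that f is the sum of the
squarefree monomials X^(T i). Differentiating a squarefree monomial along a list of variables
either kills it or removes those variables, so every partial derivative of f is
\<Sum>{X^(T i - V) | V \<subseteq> T i} for the set V of differentiation variables. If V contains Y_k only
the term i = k survives and we get the monomial of the face F_k - G; otherwise V = {X_j | j \<in> G}
and we get \<partial>f/\<partial>G. Conversely every basis element arises this way with order at most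
d = deg f - 1. The basis elements are independent because each has a private monomial:
X^G for the monomial of G, and Y_k X^(F_k - G) for \<partial>f/\<partial>G, where G \<subseteq> F_k.\<close>

lemma sum_fun_apply: "(sum g I :: 'a \<Rightarrow> 'b::comm_monoid_add) x = (\<Sum>i\<in>I. g i x)"
  by (induction I rule: infinite_finite_induct) auto

definition sqfree_mon :: "'a set \<Rightarrow> 'a \<Rightarrow>\<^sub>0 nat" where
  "sqfree_mon S = (\<Sum>v\<in>S. Poly_Mapping.single v 1)"

lemma lookup_sqfree_mon:
  "finite S \<Longrightarrow> Poly_Mapping.lookup (sqfree_mon S) w = (if w \<in> S then 1 else 0)"
  unfolding sqfree_mon_def lookup_sum lookup_single by (simp add: when_def)

lemma sqfree_mon_eq_iff:
  assumes "finite A" "finite B"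
  shows "sqfree_mon A = sqfree_mon B \<longleftrightarrow> A = B"
proof
  assume eq: "sqfree_mon A = sqfree_mon B"
  have "w \<in> A \<longleftrightarrow> w \<in> B" for w
    using arg_cong[OF eq, of "\<lambda>p. Poly_Mapping.lookup p w"] assms
    by (auto simp: lookup_sqfree_mon split: if_splits)
  then show "A = B" by blast
qed simp

lemma tdeg_sqfree_mon: "finite S \<Longrightarrow> tdeg (sqfree_mon S) = card S"
proof -
  assume fin: "finite S"
  then have "Poly_Mapping.keys (sqfree_mon S) = S"
    by (auto simp: in_keys_iff lookup_sqfree_mon split: if_splits)
  then show ?thesis using fin by (simp add: tdeg_def lookup_sqfree_mon)
qed

lemma xexp_eq_sqfree_mon: "xexp G = sqfree_mon (Inl ` G)"
  unfolding xexp_def sqfree_mon_def by (simp add: sum.reindex)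

lemma add_single_eq_sqfree_mon_iff:
  assumes fin: "finite S"
  shows "\<mu> + Poly_Mapping.single v 1 = sqfree_mon S \<longleftrightarrow> v \<in> S \<and> \<mu> = sqfree_mon (S - {v})"
proof
  assume eq: "\<mu> + Poly_Mapping.single v 1 = sqfree_mon S"
  have l: "Poly_Mapping.lookup \<mu> w + (if v = w then 1 else 0) = (if w \<in> S then 1 else 0)" for w
    using arg_cong[OF eq, of "\<lambda>p. Poly_Mapping.lookup p w"] fin
    by (simp only: lookup_add lookup_sqfree_mon[OF fin] lookup_single when_def)
  from l[of v] have v: "v \<in> S" by (auto split: if_splits)
  have "Poly_Mapping.lookup \<mu> w = Poly_Mapping.lookup (sqfree_mon (S - {v})) w" for w
    using l[of w] v fin by (cases "v = w") (simp_all add: lookup_sqfree_mon)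
  with v show "v \<in> S \<and> \<mu> = sqfree_mon (S - {v})" by (blast intro: poly_mapping_eqI)
next
  assume "v \<in> S \<and> \<mu> = sqfree_mon (S - {v})"
  then show "\<mu> + Poly_Mapping.single v 1 = sqfree_mon S"
    by (intro poly_mapping_eqI) (use fin in \<open>auto simp: lookup_add lookup_sqfree_mon lookup_single when_def\<close>)
qed

lemma pderivQ_add: "pderivQ v (p + q) = pderivQ v p + pderivQ v q"
  by (rule ext) (simp add: pderivQ_def algebra_simps)

lemma pderivQ_zero [simp]: "pderivQ v 0 = 0"
  by (rule ext) (simp add: pderivQ_def)

lemma pderivQ_sum: "pderivQ v (sum g I) = (\<Sum>i\<in>I. pderivQ v (g i))"
proof (induction I rule: infinite_finite_induct)
  case (infinite I)
  then show ?case by (simp only: sum.infinite[OF infinite] pderivQ_zero)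
next
  case (insert i I)
  then show ?case by (simp only: sum.insert[OF insert(1,2)] pderivQ_add)
qed (simp only: sum.empty pderivQ_zero)

lemma pderivs_Nil [simp]: "pderivs [] p = p"
  by (simp add: pderivs_def)

lemma pderivs_Cons: "pderivs (v # vs) p = pderivs vs (pderivQ v p)"
  by (simp add: pderivs_def)

lemma pderivs_zero [simp]: "pderivs vs 0 = 0"
  by (induction vs) (simp_all only: pderivs_Nil pderivs_Cons pderivQ_zero)

lemma pderivs_sum: "pderivs vs (sum g I) = (\<Sum>i\<in>I. pderivs vs (g i))"
  by (induction vs arbitrary: g) (simp_all add: pderivs_Cons pderivQ_sum)

lemma pderivQ_monoP_sqfree_mon:
  assumes fin: "finite S"
  shows "pderivQ v (monoP (sqfree_mon S)) = (if v \<in> S then monoP (sqfree_mon (S - {v})) else 0)"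
proof
  fix \<mu>
  have "pderivQ v (monoP (sqfree_mon S)) \<mu>
      = of_nat (Poly_Mapping.lookup \<mu> v + 1) * (if v \<in> S \<and> \<mu> = sqfree_mon (S - {v}) then 1 else 0)"
    unfolding pderivQ_def monoP_def add_single_eq_sqfree_mon_iff[OF fin] ..
  also have "\<dots> = (if v \<in> S then monoP (sqfree_mon (S - {v})) else 0) \<mu>"
    using fin by (auto simp: monoP_def lookup_sqfree_mon)
  finally show "pderivQ v (monoP (sqfree_mon S)) \<mu> = \<dots>" .
qed

lemma pderivs_monoP_sqfree_mon:
  "finite S \<Longrightarrow> pderivs vs (monoP (sqfree_mon S)) =
     (if distinct vs \<and> set vs \<subseteq> S then monoP (sqfree_mon (S - set vs)) else 0)"
proof (induction vs arbitrary: S)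
  case (Cons v vs)
  then show ?case
    by (cases "v \<in> S")
      (auto simp: pderivs_Cons pderivQ_monoP_sqfree_mon Diff_insert2[symmetric] insert_commute)
qed simp

subsection \<open>Linear independence by separating monomials\<close>

lemma vector_space_scaleQ: "vector_space scaleQ"
  by unfold_locales (auto simp: scaleQ_def algebra_simps)

lemma separating_monomials_independent:
  fixes g :: "'i \<Rightarrow> qpoly"
  assumes sep: "\<And>a. a \<in> I \<Longrightarrow> \<exists>\<mu>. g a \<mu> \<noteq> 0 \<and> (\<forall>b\<in>I. b \<noteq> a \<longrightarrow> g b \<mu> = 0)"
  shows "inj_on g I" "\<not> module.dependent scaleQ (g ` I)"
proof -
  show "inj_on g I"
    by (rule inj_onI) (metis sep)
  interpret V: vector_space scaleQ by (rule vector_space_scaleQ)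
  show "\<not> V.dependent (g ` I)"
  proof
    assume "V.dependent (g ` I)"
    then obtain t u p where t: "finite t" "t \<subseteq> g ` I" "(\<Sum>q\<in>t. scaleQ (u q) q) = 0"
      and p: "p \<in> t" "u p \<noteq> 0"
      unfolding V.dependent_explicit by blast
    obtain a where a: "a \<in> I" "p = g a" using p t by blast
    obtain \<mu> where \<mu>: "g a \<mu> \<noteq> 0" "\<forall>b\<in>I. b \<noteq> a \<longrightarrow> g b \<mu> = 0" using sep[OF a(1)] by blast
    have others: "u q * q \<mu> = 0" if "q \<in> t - {p}" for q
      using that t(2) a \<mu>(2) by fastforce
    have "0 = (\<Sum>q\<in>t. u q * q \<mu>)"
      using arg_cong[OF t(3), of "\<lambda>h. h \<mu>"] by (simp add: sum_fun_apply scaleQ_def)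
    also have "\<dots> = u p * p \<mu>"
      using t(1) p(1) others by (simp add: sum.remove sum.neutral)
    finally show False using p(2) \<mu>(1) a(2) by simp
  qed
qed

definition facet_vars :: "(nat \<Rightarrow> nat set) \<Rightarrow> nat \<Rightarrow> var set" where
  "facet_vars F i = insert (Inr i) (Inl ` F i)"

lemma facet_vars_minus_Inl: "facet_vars F i - Inl ` G = insert (Inr i) (Inl ` (F i - G))"
  unfolding facet_vars_def by auto

lemma insert_Inr_image_Inl_eq_iff:
  "insert (Inr k) (Inl ` A) = insert (Inr i) (Inl ` B) \<longleftrightarrow> k = i \<and> A = B"
  by (auto simp: inj_image_eq_iff)

locale finite_facets =
  fixes m :: nat and F :: "nat \<Rightarrow> nat set"
  assumes finite_facet: "i \<in> {1..m} \<Longrightarrow> finite (F i)"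
begin

abbreviation "f \<equiv> fpoly m F"
abbreviation "\<Delta> \<equiv> gen_complex m F"

text \<open>The derivative of f along any list of distinct variables with underlying set V.\<close>
definition partial_along :: "var set \<Rightarrow> qpoly" where
  "partial_along V = (\<Sum>i\<in>{1..m}.
     if V \<subseteq> facet_vars F i then monoP (sqfree_mon (facet_vars F i - V)) else 0)"

lemma finite_facet_vars: "i \<in> {1..m} \<Longrightarrow> finite (facet_vars F i)"
  by (simp add: facet_vars_def finite_facet)

lemma fpoly_eq_sum_sqfree_mon: "f = (\<Sum>i\<in>{1..m}. monoP (sqfree_mon (facet_vars F i)))"
  unfolding fpoly_def
proof (rule sum.cong[OF refl])
  fix i assume i: "i \<in> {1..m}"
  have "sqfree_mon (facet_vars F i) = Poly_Mapping.single (Inr i) 1 + sqfree_mon (Inl ` F i)"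
    unfolding facet_vars_def sqfree_mon_def using finite_facet[OF i] by (subst sum.insert) auto
  then show "monoP (Poly_Mapping.single (Inr i) 1 + xexp (F i)) = monoP (sqfree_mon (facet_vars F i))"
    by (simp add: xexp_eq_sqfree_mon)
qed

lemma fpoly_nonzero_iff: "f \<mu> \<noteq> 0 \<longleftrightarrow> (\<exists>i\<in>{1..m}. \<mu> = sqfree_mon (facet_vars F i))"
proof -
  have "f \<mu> = (\<Sum>i\<in>{1..m}. if \<mu> = sqfree_mon (facet_vars F i) then 1 else 0)"
    unfolding fpoly_eq_sum_sqfree_mon sum_fun_apply by (rule sum.cong) (auto simp: monoP_def)
  then show ?thesis by (simp add: sum_nonneg_eq_0_iff)
qed

lemma pderivs_fpoly: "pderivs vs f = (if distinct vs then partial_along (set vs) else 0)"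
proof -
  have "pderivs vs f = (\<Sum>i\<in>{1..m}. pderivs vs (monoP (sqfree_mon (facet_vars F i))))"
    unfolding fpoly_eq_sum_sqfree_mon pderivs_sum ..
  also have "\<dots> = (\<Sum>i\<in>{1..m}. if distinct vs \<and> set vs \<subseteq> facet_vars F i
                     then monoP (sqfree_mon (facet_vars F i - set vs)) else 0)"
    by (rule sum.cong) (simp_all add: pderivs_monoP_sqfree_mon finite_facet_vars)
  finally show ?thesis
    unfolding partial_along_def by (cases "distinct vs") auto
qed

lemma dF_fpoly: "finite G \<Longrightarrow> dF G f = partial_along (Inl ` G)"
  unfolding dF_def pderivs_fpoly by (simp add: distinct_map)

lemma partial_along_Inl: "partial_along (Inl ` G) =
  (\<Sum>i\<in>{1..m}. if G \<subseteq> F i then monoP (sqfree_mon (insert (Inr i) (Inl ` (F i - G)))) else 0)"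
  unfolding partial_along_def facet_vars_minus_Inl by (rule sum.cong) (auto simp: facet_vars_def)

lemma partial_along_Inr:
  assumes "Inr k \<in> V"
  shows "partial_along V =
    (if k \<in> {1..m} \<and> V \<subseteq> facet_vars F k then monoP (sqfree_mon (facet_vars F k - V)) else 0)"
proof -
  have "partial_along V = (\<Sum>i\<in>{1..m}. if i = k then
      (if V \<subseteq> facet_vars F k then monoP (sqfree_mon (facet_vars F k - V)) else 0) else 0)"
    unfolding partial_along_def by (rule sum.cong) (use assms in \<open>auto simp: facet_vars_def\<close>)
  then show ?thesis by (simp add: sum.delta)
qed

lemma dF_fpoly_apply:
  "finite G \<Longrightarrow> dF G f \<mu> =
     (\<Sum>i\<in>{1..m}. if G \<subseteq> F i \<and> \<mu> = sqfree_mon (insert (Inr i) (Inl ` (F i - G))) then 1 else 0)"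
  unfolding dF_fpoly partial_along_Inl sum_fun_apply by (rule sum.cong) (auto simp: monoP_def)

lemma dF_fpoly_apply_Inl:
  assumes "finite G" "finite H"
  shows "dF G f (sqfree_mon (Inl ` H)) = 0"
proof -
  have "sqfree_mon (Inl ` H) \<noteq> sqfree_mon (insert (Inr i) (Inl ` (F i - G)))" if "i \<in> {1..m}" for i
    using assms finite_facet[OF that] by (subst sqfree_mon_eq_iff) auto
  then show ?thesis using assms(1) by (simp add: dF_fpoly_apply)
qed

lemma dF_fpoly_apply_facet:
  assumes k: "k \<in> {1..m}" and H: "H \<subseteq> F k" and G: "finite G"
  shows "dF G f (sqfree_mon (insert (Inr k) (Inl ` (F k - H)))) = (if G = H then 1 else 0)"
proof -
  have "G \<subseteq> F i \<and> sqfree_mon (insert (Inr k) (Inl ` (F k - H)))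
          = sqfree_mon (insert (Inr i) (Inl ` (F i - G))) \<longleftrightarrow> i = k \<and> G = H"
    if i: "i \<in> {1..m}" for i
    using finite_facet[OF k] finite_facet[OF i] H
    by (auto simp: sqfree_mon_eq_iff insert_Inr_image_Inl_eq_iff)
  then have "dF G f (sqfree_mon (insert (Inr k) (Inl ` (F k - H))))
           = (\<Sum>i\<in>{1..m}. if i = k then (if G = H then 1 else 0) else 0)"
    unfolding dF_fpoly_apply[OF G] by (intro sum.cong) auto
  then show ?thesis using k by (simp add: sum.delta)
qed

subsection \<open>Independence of the proposed basis\<close>

abbreviation "basis \<equiv> (\<lambda>Y. monoP (xexp Y)) ` \<Delta> \<union> (\<lambda>Y. dF Y f) ` \<Delta>"

definition basis_elem :: "nat set + nat set \<Rightarrow> qpoly" where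
  "basis_elem = case_sum (\<lambda>G. monoP (xexp G)) (\<lambda>G. dF G f)"

lemma image_basis_elem: "basis_elem ` (\<Delta> <+> \<Delta>) = basis"
  unfolding basis_elem_def Plus_def image_Un image_image by simp

lemma face_subset_facet:
  assumes "G \<in> \<Delta>"
  obtains k where "k \<in> {1..m}" "G \<subseteq> F k"
  using assms unfolding gen_complex_def by blast

lemma finite_face: "G \<in> \<Delta> \<Longrightarrow> finite G"
  by (metis face_subset_facet finite_facet finite_subset)

lemma finite_complex: "finite \<Delta>"
proof (rule finite_subset)
  show "\<Delta> \<subseteq> (\<Union>i\<in>{1..m}. Pow (F i))" by (auto simp: gen_complex_def)
qed (simp add: finite_facet)

lemma basis_elem_separated:
  assumes a: "a \<in> \<Delta> <+> \<Delta>"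
  shows "\<exists>\<mu>. basis_elem a \<mu> \<noteq> 0 \<and> (\<forall>b\<in>\<Delta> <+> \<Delta>. b \<noteq> a \<longrightarrow> basis_elem b \<mu> = 0)"
proof (cases a)
  case (Inl G)
  have "basis_elem b (sqfree_mon (Inl ` G)) = (if b = a then 1 else 0)" if "b \<in> \<Delta> <+> \<Delta>" for b
    using that a Inl
    by (auto simp: basis_elem_def xexp_eq_sqfree_mon monoP_def sqfree_mon_eq_iff finite_face
        inj_image_eq_iff dF_fpoly_apply_Inl split: if_splits)
  with a show ?thesis by (metis one_neq_zero)
next
  case (Inr G)
  with a have "G \<in> \<Delta>" by auto
  then obtain k where k: "k \<in> {1..m}" "G \<subseteq> F k" by (rule face_subset_facet)
  have "basis_elem b (sqfree_mon (insert (Inr k) (Inl ` (F k - G)))) = (if b = a then 1 else 0)"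
    if "b \<in> \<Delta> <+> \<Delta>" for b
    using that a Inr k finite_facet[OF k(1)]
    by (auto simp: basis_elem_def xexp_eq_sqfree_mon monoP_def sqfree_mon_eq_iff finite_face
        dF_fpoly_apply_facet split: if_splits)
  with a show ?thesis by (metis one_neq_zero)
qed

lemma inj_on_basis_elem: "inj_on basis_elem (\<Delta> <+> \<Delta>)"
  and basis_independent: "\<not> module.dependent scaleQ basis"
  using separating_monomials_independent[of "\<Delta> <+> \<Delta>" basis_elem] basis_elem_separated
  unfolding image_basis_elem by blast+

lemma card_basis: "card basis = 2 * card \<Delta>"
  using card_image[OF inj_on_basis_elem] finite_complex by (simp add: image_basis_elem card_Plus)

end

subsection \<open>Spanning\<close>

locale uniform_facets = finite_facets +
  fixes d :: nat
  assumes card_facet: "i \<in> {1..m} \<Longrightarrow> card (F i) = d"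
begin

lemma pdeg_fpoly: "pdeg f = (if m = 0 then 0 else d + 1)"
proof -
  have card_facet_vars: "card (facet_vars F i) = d + 1" if "i \<in> {1..m}" for i
    using finite_facet[OF that] card_facet[OF that] unfolding facet_vars_def
    by (subst card_insert_disjoint) (auto simp: card_image)
  have "{tdeg \<mu> | \<mu>. f \<mu> \<noteq> 0} = tdeg ` (\<lambda>i. sqfree_mon (facet_vars F i)) ` {1..m}"
    by (auto simp: fpoly_nonzero_iff)
  also have "\<dots> = (\<lambda>i. d + 1) ` {1..m}"
    unfolding image_image by (intro image_cong) (simp_all add: tdeg_sqfree_mon finite_facet_vars card_facet_vars)
  finally show ?thesis by (simp add: pdeg_def)
qed

lemma partial_along_Inr_in_basis:
  assumes k: "Inr k \<in> V" and V: "finite V" "card V \<le> d"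
  shows "partial_along V \<in> insert 0 basis"
proof (cases "k \<in> {1..m} \<and> V \<subseteq> facet_vars F k")
  case True
  then have k_facet: "k \<in> {1..m}" and "V \<subseteq> facet_vars F k" by auto
  define G where "G = Inl -` V"
  have V_eq: "V = insert (Inr k) (Inl ` G)" and G_facet: "G \<subseteq> F k"
    using k \<open>V \<subseteq> facet_vars F k\<close> by (auto simp: G_def facet_vars_def)
  have "finite G" using G_facet finite_facet[OF k_facet] finite_subset by blast
  then have "card G < card (F k)"
    using V card_facet[OF k_facet] by (simp add: V_eq card_image[OF inj_Inl] image_iff)
  then have "F k - G \<in> \<Delta>"
    using G_facet k_facet by (auto simp: gen_complex_def)
  moreover have "facet_vars F k - V = Inl ` (F k - G)"
    using V_eq by (auto simp: facet_vars_def)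
  then have "partial_along V = monoP (xexp (F k - G))"
    using True by (simp add: partial_along_Inr[OF k] xexp_eq_sqfree_mon)
  ultimately show ?thesis by blast
qed (use partial_along_Inr[OF k] in auto)

lemma partial_along_Inl_in_basis:
  assumes "G \<noteq> {}" "finite G"
  shows "partial_along (Inl ` G) \<in> insert 0 basis"
proof (cases "G \<in> \<Delta>")
  case True
  then show ?thesis by (simp add: dF_fpoly[OF assms(2), symmetric])
next
  case False
  then have "\<not> G \<subseteq> F i" if "i \<in> {1..m}" for i
    using assms(1) that by (auto simp: gen_complex_def)
  then show ?thesis by (simp add: partial_along_Inl)
qed

lemma pderivs_fpoly_in_basis:
  assumes "1 \<le> length vs" "length vs \<le> d"
  shows "pderivs vs f \<in> insert 0 basis"
proof (cases "distinct vs")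
  case True
  then have card_V: "card (set vs) \<le> d" using assms(2) by (simp add: distinct_card)
  show ?thesis
  proof (cases "\<exists>k. Inr k \<in> set vs")
    case True
    then show ?thesis
      using partial_along_Inr_in_basis card_V \<open>distinct vs\<close> by (auto simp: pderivs_fpoly)
  next
    case False
    have "x \<in> range Inl" if "x \<in> set vs" for x
      using that False by (cases x rule: sum.exhaust) auto
    then have V_eq: "set vs = Inl ` (Inl -` set vs)" by blast
    moreover have "Inl -` set vs \<noteq> {}"
      using assms(1) V_eq by (metis image_empty length_0_conv not_one_le_zero set_empty)
    moreover have "finite (Inl -` set vs)" by (simp add: finite_vimageI)
    ultimately show ?thesis
      using partial_along_Inl_in_basis \<open>distinct vs\<close> by (metis pderivs_fpoly)
  qed
qed (simp add: pderivs_fpoly)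

lemma card_face:
  assumes G: "G \<in> \<Delta>"
  shows "1 \<le> card G \<and> card G \<le> d"
proof -
  obtain k where k: "k \<in> {1..m}" "G \<subseteq> F k" using G by (rule face_subset_facet)
  have "card G \<le> d" using card_mono[OF finite_facet[OF k(1)] k(2)] card_facet[OF k(1)] by simp
  moreover have "G \<noteq> {}" using G by (simp add: gen_complex_def)
  ultimately show ?thesis using finite_face[OF G] by (simp add: Suc_le_eq card_gt_0_iff)
qed

lemma partials_plus_fpoly:
  "m \<noteq> 0 \<Longrightarrow> partials_plus f = {pderivs vs f | vs. 1 \<le> length vs \<and> length vs \<le> d}"
  by (simp add: partials_plus_def pdeg_fpoly)

lemma basis_subset_partials_plus: "basis \<subseteq> partials_plus f"
proof
  fix p assume "p \<in> basis"
  then obtain G where G: "G \<in> \<Delta>" and p: "p = monoP (xexp G) \<or> p = dF G f" by blast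
  obtain k where k: "k \<in> {1..m}" "G \<subseteq> F k" using G by (rule face_subset_facet)
  then have partials: "partials_plus f = {pderivs vs f | vs. 1 \<le> length vs \<and> length vs \<le> d}"
    by (intro partials_plus_fpoly) auto
  have "monoP (xexp G) \<in> partials_plus f"
  proof -
    define V where "V = insert (Inr k) (Inl ` (F k - G))"
    obtain vs where vs: "set vs = V" "distinct vs"
      using finite_distinct_list[of V] finite_facet[OF k(1)] by (auto simp: V_def)
    have "card V = Suc (card (F k - G))"
      unfolding V_def using finite_facet[OF k(1)]
      by (subst card_insert_disjoint) (auto simp: card_image)
    then have "length vs = Suc (d - card G)"
      using distinct_card[OF vs(2)] finite_face[OF G] k card_facet[OF k(1)]
      by (simp add: vs(1) card_Diff_subset)
    moreover have "V \<subseteq> facet_vars F k" "facet_vars F k - V = Inl ` G"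
      using k by (auto simp: V_def facet_vars_def)
    then have "pderivs vs f = monoP (xexp G)"
      using vs k by (simp add: pderivs_fpoly partial_along_Inr[of k] V_def xexp_eq_sqfree_mon)
    ultimately show ?thesis unfolding partials using card_face[OF G] by (auto intro!: exI[of _ vs])
  qed
  moreover have "dF G f \<in> partials_plus f"
    unfolding partials dF_def using card_face[OF G] by force
  ultimately show "p \<in> partials_plus f" using p by blast
qed

lemma span_basis: "module.span scaleQ basis = module.span scaleQ (partials_plus f)"
proof -
  interpret V: vector_space scaleQ by (rule vector_space_scaleQ)
  have "partials_plus f \<subseteq> V.span basis"
  proof
    fix p assume "p \<in> partials_plus f"
    then obtain vs where "p = pderivs vs f" "1 \<le> length vs" "length vs \<le> pdeg f - 1"
      unfolding partials_plus_def by blast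
    moreover have "pdeg f - 1 \<le> d" by (simp add: pdeg_fpoly)
    ultimately have "p \<in> insert 0 basis" using pderivs_fpoly_in_basis by simp
    then show "p \<in> V.span basis" by (auto intro: V.span_base V.span_zero)
  qed
  moreover have "basis \<subseteq> V.span (partials_plus f)"
    using basis_subset_partials_plus V.span_superset by blast
  ultimately show ?thesis by (simp only: V.span_eq)
qed

end

theorem lemma6:
  fixes n m d :: nat and F :: "nat \<Rightarrow> nat set"
  assumes "\<forall>i\<in>{1..m}. F i \<subseteq> {1..n} \<and> card (F i) = d"
  defines "\<Delta> \<equiv> gen_complex m F"
    and "f \<equiv> fpoly m F"
    and "B \<equiv> (\<lambda>Y. monoP (xexp Y)) ` gen_complex m F \<union> (\<lambda>Y. dF Y (fpoly m F)) ` gen_complex m F"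
  shows "card B = 2 * card \<Delta>
     \<and> \<not> module.dependent scaleQ B
     \<and> module.span scaleQ B = module.span scaleQ (partials_plus f)
     \<and> vector_space.dim scaleQ (partials_plus f) = 2 * card \<Delta>"
proof -
  interpret uniform_facets m F d
    by unfold_locales (use assms(1) finite_subset[of _ "{1..n}"] in auto)
  interpret V: vector_space scaleQ by (rule vector_space_scaleQ)
  have "V.dim (partials_plus f) = V.dim B"
    using span_basis V.dim_span unfolding B_def f_def by metis
  also have "\<dots> = card B"
    using basis_independent unfolding B_def by (rule V.dim_eq_card_independent)
  finally show ?thesis
    using card_basis basis_independent span_basis unfolding B_def f_def \<Delta>_def by simp
qed

end
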